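(* Let $G$ be a $2$-connected graph, $k\ge 0$ an integer, and $F\subseteq E(G)$ with $|F|\le k$ such that $T=G/F$ is a cactus; let $\mathcal{W}$ be the $T$-witness structure of $G$. Let $f:V(G)\to\{1,2,3\}$ be a random coloring in which each vertex receives a color independently and uniformly at random. Then $f$ is compatible with $\mathcal{W}$ with probability at least $1/3^{6k}$.
   Context: A cactus is a connected graph in which every edge lies in at most one cycle. For $F\subseteq E(G)$, $G/F$ is the graph whose vertices correspond to the parts of the partition of $V(G)$ into the vertex sets of connected components of $(V(F),F)$ and singletons $\{v\}$ for $v\notin V(F)$, two parts adjacent iff some edge of $G$ joins them; this partition is the $G/F$-witness structure $\mathcal{W}$, with $W(t)$ the part for $t\in V(G/F)$. A witness set is big if it has at least two vertices, singleton otherwise. A cable path in a graph $H$ is a path $(v_1,\dots,v_q)$ such that $N_H(v_i)=\{v_{i-1},v_{i+1}\}$ for each $2\le i\le q-1$. A coloring $f:V(G)\to\{1,2,3\}$ is compatible with $\mathcal{W}$ if: (1) every witness set is monochromatic; (2) for every edge $t_xt_y\in E(T)$ with $W(t_x),W(t_y)$ both big, $f(W(t_x))\ne f(W(t_y))$; (3) for every cable path $(t_x,t_1,\dots,t_q,t_y)$ in $T$ ($q\ge1$) with $W(t_x),W(t_y)$ big and all $W(t_i)$ singleton, $f(W(t_x))\neq f(W(t_1))$ and $f(W(t_y))\ne f(W(t_q))$. *)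

theory Defs
  imports "HOL-Probability.Probability"
begin

definition simple_graph :: "'v set \<Rightarrow> 'v set set \<Rightarrow> bool" where
  "simple_graph V E \<longleftrightarrow> finite V \<and> (\<forall>e\<in>E. \<exists>u v. e = {u, v} \<and> u \<noteq> v \<and> u \<in> V \<and> v \<in> V)"

definition adj_rel :: "'v set set \<Rightarrow> ('v \<times> 'v) set" where
  "adj_rel E = {(u, v). {u, v} \<in> E \<and> u \<noteq> v}"

definition connected_graph :: "'v set \<Rightarrow> 'v set set \<Rightarrow> bool" where
  "connected_graph V E \<longleftrightarrow> V \<noteq> {} \<and> (\<forall>u\<in>V. \<forall>v\<in>V. (u, v) \<in> (adj_rel E)\<^sup>*)"

definition delete_vertex :: "'v set \<Rightarrow> 'v set set \<Rightarrow> 'v \<Rightarrow> 'v set \<times> 'v set set" where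
  "delete_vertex V E v = (V - {v}, {e\<in>E. v \<notin> e})"

definition two_connected :: "'v set \<Rightarrow> 'v set set \<Rightarrow> bool" where
  "two_connected V E \<longleftrightarrow> card V \<ge> 3 \<and> connected_graph V E \<and>
     (\<forall>v\<in>V. connected_graph (V - {v}) {e\<in>E. v \<notin> e})"

definition cycle_edges :: "'v list \<Rightarrow> 'v set set" where
  "cycle_edges vs = {{vs ! i, vs ! ((i + 1) mod length vs)} | i. i < length vs}"

definition is_cycle :: "'v set \<Rightarrow> 'v set set \<Rightarrow> 'v set set \<Rightarrow> bool" where
  "is_cycle V E C \<longleftrightarrow> (\<exists>vs. distinct vs \<and> length vs \<ge> 3 \<and> set vs \<subseteq> V \<and>
       cycle_edges vs \<subseteq> E \<and> C = cycle_edges vs)"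

definition cactus :: "'v set \<Rightarrow> 'v set set \<Rightarrow> bool" where
  "cactus V E \<longleftrightarrow> connected_graph V E \<and>
     (\<forall>e\<in>E. \<forall>C1 C2. is_cycle V E C1 \<and> is_cycle V E C2 \<and> e \<in> C1 \<and> e \<in> C2 \<longrightarrow> C1 = C2)"

text \<open>Witness set of v in G/F: the vertex set of the connected component of (V(F),F)
  containing v if v \<in> V(F), and {v} otherwise (both are the F-reachability class of v).\<close>
definition witness_of :: "'v set set \<Rightarrow> 'v \<Rightarrow> 'v set" where
  "witness_of F v = {u. (v, u) \<in> (adj_rel F)\<^sup>*}"

text \<open>The G/F-witness structure (set of parts) = vertex set of the contracted graph.\<close>
definition witness_structure :: "'v set \<Rightarrow> 'v set set \<Rightarrow> 'v set set" where
  "witness_structure V F = witness_of F ` V"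

definition contract_edges :: "'v set \<Rightarrow> 'v set set \<Rightarrow> 'v set set \<Rightarrow> 'v set set set" where
  "contract_edges V E F = {{A, B} | A B. A \<in> witness_structure V F \<and> B \<in> witness_structure V F \<and>
       A \<noteq> B \<and> (\<exists>a\<in>A. \<exists>b\<in>B. {a, b} \<in> E)}"

definition nbhd :: "'t set set \<Rightarrow> 't \<Rightarrow> 't set" where
  "nbhd E x = {y. {x, y} \<in> E \<and> y \<noteq> x}"

definition is_path :: "'t set \<Rightarrow> 't set set \<Rightarrow> 't list \<Rightarrow> bool" where
  "is_path V E ps \<longleftrightarrow> ps \<noteq> [] \<and> distinct ps \<and> set ps \<subseteq> V \<and>
     (\<forall>i. i + 1 < length ps \<longrightarrow> {ps ! i, ps ! (i + 1)} \<in> E)"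

definition cable_path :: "'t set \<Rightarrow> 't set set \<Rightarrow> 't list \<Rightarrow> bool" where
  "cable_path V E ps \<longleftrightarrow> is_path V E ps \<and>
     (\<forall>i. 0 < i \<and> i + 1 < length ps \<longrightarrow> nbhd E (ps ! i) = {ps ! (i - 1), ps ! (i + 1)})"

definition compatible :: "'v set \<Rightarrow> 'v set set \<Rightarrow> 'v set set \<Rightarrow> ('v \<Rightarrow> nat) \<Rightarrow> bool" where
  "compatible V E F f \<longleftrightarrow>
     (let TV = witness_structure V F; TE = contract_edges V E F in
      (\<forall>W\<in>TV. \<forall>a\<in>W. \<forall>b\<in>W. f a = f b) \<and>
      (\<forall>A B. {A, B} \<in> TE \<and> A \<noteq> B \<and> card A \<ge> 2 \<and> card B \<ge> 2 \<longrightarrow>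
          (\<forall>a\<in>A. \<forall>b\<in>B. f a \<noteq> f b)) \<and>
      (\<forall>ps. cable_path TV TE ps \<and> length ps \<ge> 3 \<and> card (hd ps) \<ge> 2 \<and> card (last ps) \<ge> 2 \<and>
          (\<forall>i. 0 < i \<and> i + 1 < length ps \<longrightarrow> card (ps ! i) = 1) \<longrightarrow>
          (\<forall>a\<in>hd ps. \<forall>b\<in>ps ! 1. f a \<noteq> f b) \<and>
          (\<forall>a\<in>last ps. \<forall>b\<in>ps ! (length ps - 2). f a \<noteq> f b)))"

end

theory Submission
  imports Defs
begin

(* A colouring is compatible as soon as it agrees with one fixed colouring on the critical vertices:
   the vertices of big witness sets, and the vertex of the first (singleton) inner witness set of each
   cable path between big witness sets. There are at most 6|F| critical vertices, which gives the bound.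

   Every vertex of a big witness set is an endpoint of an edge of F, so big witness sets cover at most
   2|F| vertices and there are at most |F| of them. The union of the cable paths is a subgraph of the
   cactus T whose inner vertices have degree 2 and each of whose cycles carries at least four oriented
   cable paths; with the cyclomatic bound |E| + 1 <= |V| + #cycles this leaves at most four cable paths
   per big witness set. The fixed colouring exists because a graph with edge-disjoint cycles has a
   vertex of degree at most 2 (again by the cyclomatic bound), hence is 3-colourable, and the first
   inner witness set of a cable path has at most two big neighbours. *)

section \<open>Simple graphs and the cyclomatic bound\<close>

lemma simple_graph_edgeD:
  assumes "simple_graph V E" "{x, y} \<in> E"
  shows "x \<noteq> y" "x \<in> V" "y \<in> V"
  using assms unfolding simple_graph_def by (auto simp: doubleton_eq_iff)

lemma simple_graph_edges_subset: "simple_graph V E \<Longrightarrow> e \<in> E \<Longrightarrow> e \<subseteq> V"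
  unfolding simple_graph_def by auto

lemma simple_graph_finite_edges: "simple_graph V E \<Longrightarrow> finite E"
  unfolding simple_graph_def by (auto intro: finite_subset[of E "Pow V"])

lemma simple_graph_subgraph:
  assumes "simple_graph V E" "V' \<subseteq> V" "E' \<subseteq> E" "\<forall>e\<in>E'. e \<subseteq> V'"
  shows "simple_graph V' E'"
  using assms unfolding simple_graph_def by (auto intro: finite_subset) (metis insert_subset subsetD)

lemma simple_graph_edge_subset: "simple_graph V E \<Longrightarrow> E' \<subseteq> E \<Longrightarrow> simple_graph V E'"
  unfolding simple_graph_def by blast

lemma is_cycle_subset_edges: "is_cycle V E C \<Longrightarrow> C \<subseteq> E"
  unfolding is_cycle_def by auto

lemma is_cycle_nonempty: "is_cycle V E C \<Longrightarrow> C \<noteq> {}"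
  unfolding is_cycle_def cycle_edges_def by fastforce

lemma is_cycle_mono: "is_cycle V' E' C \<Longrightarrow> V' \<subseteq> V \<Longrightarrow> E' \<subseteq> E \<Longrightarrow> is_cycle V E C"
  unfolding is_cycle_def by blast

lemma finite_cycles: "simple_graph V E \<Longrightarrow> finite {C. is_cycle V E C}"
  using simple_graph_finite_edges is_cycle_subset_edges
  by (metis (no_types, lifting) Collect_mono Pow_def finite_Pow_iff finite_subset)

lemma cycle_edgeI: "i < length vs \<Longrightarrow> {vs ! i, vs ! ((i + 1) mod length vs)} \<in> cycle_edges vs"
  unfolding cycle_edges_def by blast

lemma cycle_edges_subset: "e \<in> cycle_edges vs \<Longrightarrow> e \<subseteq> set vs"
  unfolding cycle_edges_def by (fastforce intro!: nth_mem mod_less_divisor)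

lemma distinct_nth_neq:
  "distinct xs \<Longrightarrow> i < length xs \<Longrightarrow> j < length xs \<Longrightarrow> i \<noteq> j \<Longrightarrow> xs ! i \<noteq> xs ! j"
  by (simp add: nth_eq_iff_index_eq)

lemma card_cycle_edges:
  assumes "distinct vs" "length vs \<ge> 3"
  shows "card (cycle_edges vs) \<ge> 3"
proof -
  let ?n = "length vs"
  have "vs \<noteq> []" using assms(2) by auto
  then have "{vs ! 0, vs ! 1} \<in> cycle_edges vs"
    using cycle_edgeI[of 0 vs] assms(2) by simp
  moreover have "{vs ! 1, vs ! 2} \<in> cycle_edges vs"
    using cycle_edgeI[of 1 vs] assms(2) by (simp add: numeral_2_eq_2)
  moreover have "{vs ! (?n - 1), vs ! 0} \<in> cycle_edges vs"
    using cycle_edgeI[of "?n - 1" vs] assms(2)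
    by (metis Suc_diff_1 Suc_eq_plus1 diff_less less_le_trans mod_self zero_less_numeral zero_less_one)
  ultimately have sub: "{{vs ! 0, vs ! 1}, {vs ! 1, vs ! 2}, {vs ! (?n - 1), vs ! 0}} \<subseteq> cycle_edges vs"
    by simp
  have "cycle_edges vs \<subseteq> Pow (set vs)" using cycle_edges_subset by blast
  then have fin: "finite (cycle_edges vs)" by (rule finite_subset) simp
  have "vs ! 0 \<noteq> vs ! 1" "vs ! 0 \<noteq> vs ! 2" "vs ! 1 \<noteq> vs ! 2"
    "vs ! 1 \<noteq> vs ! (?n - 1)" "vs ! 0 \<noteq> vs ! (?n - 1)"
    using assms by (intro distinct_nth_neq; auto)+
  then have "card {{vs ! 0, vs ! 1}, {vs ! 1, vs ! 2}, {vs ! (?n - 1), vs ! 0}} = 3"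
    by (simp add: doubleton_eq_iff)
  then show ?thesis using card_mono[OF fin sub] by simp
qed

lemma cycle_two_neighbours:
  assumes "distinct vs" "length vs \<ge> 3" "x \<in> set vs"
  obtains y z where "y \<noteq> z" "x \<noteq> y" "x \<noteq> z"
    "{x, y} \<in> cycle_edges vs" "{x, z} \<in> cycle_edges vs"
proof -
  let ?n = "length vs"
  obtain i where i: "i < ?n" "vs ! i = x" using assms(3) by (auto simp: in_set_conv_nth)
  define j where "j = (if i = 0 then ?n - 1 else i - 1)"
  define k where "k = (if i + 1 = ?n then 0 else i + 1)"
  have jk: "j < ?n" "k < ?n" "j \<noteq> k" "j \<noteq> i" "k \<noteq> i"
    using i assms(2) unfolding j_def k_def by auto
  have "k = (i + 1) mod ?n" "i = (j + 1) mod ?n"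
    using i assms(2) unfolding j_def k_def by auto
  then have "{x, vs ! k} \<in> cycle_edges vs" "{vs ! j, x} \<in> cycle_edges vs"
    using cycle_edgeI[OF i(1)] cycle_edgeI[OF jk(1)] i(2) by simp_all
  moreover have "vs ! k \<noteq> vs ! j" "x \<noteq> vs ! k" "x \<noteq> vs ! j"
    using jk i(1) unfolding i(2)[symmetric] by (simp_all add: nth_eq_iff_index_eq[OF assms(1)])
  ultimately show ?thesis using that by (metis insert_commute)
qed

lemma is_path_mono: "is_path V E' ps \<Longrightarrow> E' \<subseteq> E \<Longrightarrow> is_path V E ps"
  unfolding is_path_def by auto

lemma is_path_take:
  assumes "is_path V E ps" "0 < k"
  shows "is_path V E (take k ps)"
proof -
  have "set (take k ps) \<subseteq> V" using assms(1) set_take_subset unfolding is_path_def by fast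
  moreover have "take k ps \<noteq> []" using assms by (simp add: is_path_def)
  ultimately show ?thesis using assms(1) unfolding is_path_def by simp
qed

lemma is_path_snoc:
  assumes "is_path V E ps" "z \<in> V" "z \<notin> set ps" "{last ps, z} \<in> E"
  shows "is_path V E (ps @ [z])"
proof -
  have "{(ps @ [z]) ! i, (ps @ [z]) ! (i + 1)} \<in> E" if i: "i + 1 < length (ps @ [z])" for i
  proof (cases "i + 1 < length ps")
    case True
    then show ?thesis using assms(1) by (simp add: is_path_def nth_append)
  next
    case False
    then have "i = length ps - 1" "ps \<noteq> []" using i assms(1) by (simp_all add: is_path_def)
    then show ?thesis using assms(4) by (simp add: nth_append last_conv_nth)
  qed
  then show ?thesis using assms(1-3) unfolding is_path_def by simp
qed

lemma reachable_path:
  assumes "simple_graph V E" "u \<in> V" "(u, v) \<in> (adj_rel E)\<^sup>*"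
  shows "\<exists>ps. is_path V E ps \<and> hd ps = u \<and> last ps = v"
  using assms(3)
proof (induction rule: rtrancl_induct)
  case base
  show ?case using assms(2) by (intro exI[of _ "[u]"]) (simp add: is_path_def)
next
  case (step y z)
  then obtain ps where ps: "is_path V E ps" "hd ps = u" "last ps = y" by blast
  have ne: "ps \<noteq> []" using ps(1) by (simp add: is_path_def)
  have yz: "{y, z} \<in> E" using step.hyps(2) by (simp add: adj_rel_def)
  show ?case
  proof (cases "z \<in> set ps")
    case True
    then obtain j where j: "j < length ps" "ps ! j = z" by (auto simp: in_set_conv_nth)
    have "is_path V E (take (Suc j) ps)" using is_path_take[OF ps(1)] by simp
    moreover have "hd (take (Suc j) ps) = u" using ne ps(2) by simp
    moreover have "last (take (Suc j) ps) = z" using j by (simp add: take_Suc_conv_app_nth)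
    ultimately show ?thesis by blast
  next
    case False
    have "is_path V E (ps @ [z])"
      using is_path_snoc[OF ps(1) simple_graph_edgeD(3)[OF assms(1) yz] False] yz ps(3) by simp
    then show ?thesis using ne ps(2) by (intro exI[of _ "ps @ [z]"]) simp
  qed
qed

lemma is_cycle_closing_path:
  assumes "is_path V E ps" "length ps \<ge> 3" "{last ps, hd ps} \<in> E"
  shows "is_cycle V E (cycle_edges ps)" "{last ps, hd ps} \<in> cycle_edges ps"
proof -
  obtain m where m: "length ps = Suc m" using assms(2) by (cases "length ps") auto
  have ends: "last ps = ps ! m" "hd ps = ps ! 0" "(m + 1) mod length ps = 0"
    using assms(1) m by (auto simp: is_path_def last_conv_nth hd_conv_nth)
  show "{last ps, hd ps} \<in> cycle_edges ps"
    using cycle_edgeI[of m ps] m unfolding ends by simp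
  have "cycle_edges ps \<subseteq> E"
  proof
    fix e assume "e \<in> cycle_edges ps"
    then obtain i where i: "i < length ps" "e = {ps ! i, ps ! ((i + 1) mod length ps)}"
      unfolding cycle_edges_def by blast
    show "e \<in> E"
    proof (cases "i = m")
      case True
      then show ?thesis using i(2) assms(3) m unfolding ends by simp
    next
      case False
      then show ?thesis using i m assms(1) by (simp add: is_path_def)
    qed
  qed
  then show "is_cycle V E (cycle_edges ps)"
    using assms(1,2) unfolding is_cycle_def is_path_def by blast
qed

lemma cycle_through_edge_if_reachable_without:
  assumes "simple_graph V E" "{u, v} \<in> E" "(u, v) \<in> (adj_rel (E - {{u, v}}))\<^sup>*"
  shows "\<exists>C. is_cycle V E C \<and> {u, v} \<in> C"
proof -
  have "simple_graph V (E - {{u, v}})" using assms(1) by (rule simple_graph_edge_subset) blast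
  from reachable_path[OF this simple_graph_edgeD(2)[OF assms(1,2)] assms(3)]
  obtain ps where ps: "is_path V (E - {{u, v}}) ps" "hd ps = u" "last ps = v" by blast
  have "ps \<noteq> []" using ps(1) by (simp add: is_path_def)
  moreover have "length ps \<noteq> 1"
  proof
    assume "length ps = 1"
    then have "hd ps = last ps" by (cases ps) auto
    then show False using ps(2,3) simple_graph_edgeD(1)[OF assms(1,2)] by simp
  qed
  moreover have "length ps \<noteq> 2"
  proof
    assume len: "length ps = 2"
    then have "{ps ! 0, ps ! 1} \<in> E - {{u, v}}" using ps(1) unfolding is_path_def by simp
    moreover have "ps ! 0 = u" "ps ! 1 = v"
      using ps(2,3) len \<open>ps \<noteq> []\<close> by (simp_all add: hd_conv_nth last_conv_nth)
    ultimately show False by simp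
  qed
  ultimately have "length ps \<ge> 3" by (cases "length ps") auto
  moreover have "is_path V E ps" using ps(1) by (rule is_path_mono) blast
  moreover have "{last ps, hd ps} \<in> E" using assms(2) ps(2,3) by (simp add: insert_commute)
  ultimately have "is_cycle V E (cycle_edges ps)" "{v, u} \<in> cycle_edges ps"
    using is_cycle_closing_path ps(2,3) by blast+
  then show ?thesis by (auto simp: insert_commute)
qed

lemma card_cycles_less_if_cycle_edge_removed:
  assumes "simple_graph V E" "is_cycle V E C" "e \<in> C"
  shows "card {C. is_cycle V (E - {e}) C} < card {C. is_cycle V E C}"
proof (rule psubset_card_mono[OF finite_cycles[OF assms(1)]])
  have "is_cycle V E C'" if "is_cycle V (E - {e}) C'" for C'
    using that by (rule is_cycle_mono) auto
  moreover have "\<not> is_cycle V (E - {e}) C" using assms(3) is_cycle_subset_edges by blast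
  ultimately show "{C. is_cycle V (E - {e}) C} \<subset> {C. is_cycle V E C}" using assms(2) by blast
qed

lemma cyclomatic_bound_disjoint_parts:
  assumes "simple_graph V E" "X \<subseteq> V" "E1 \<union> E2 \<subseteq> E" "E1 \<inter> E2 = {}"
    and "card E1 + 1 \<le> card X + card {C. is_cycle X E1 C}"
    and "card E2 + 1 \<le> card (V - X) + card {C. is_cycle (V - X) E2 C}"
  shows "card (E1 \<union> E2) + 2 \<le> card V + card {C. is_cycle V E C}"
proof -
  let ?C1 = "{C. is_cycle X E1 C}" and ?C2 = "{C. is_cycle (V - X) E2 C}"
  have finV: "finite V" using assms(1) by (simp add: simple_graph_def)
  have "finite E1" "finite E2"
    using assms(3) simple_graph_finite_edges[OF assms(1)] by (auto intro: finite_subset)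
  then have edges: "card (E1 \<union> E2) = card E1 + card E2" using assms(4) by (rule card_Un_disjoint)
  have verts: "card V = card X + card (V - X)"
    using card_Diff_subset[OF finite_subset[OF assms(2) finV] assms(2)] card_mono[OF finV assms(2)]
    by simp
  have "?C1 \<inter> ?C2 = {}"
    using assms(4) is_cycle_subset_edges is_cycle_nonempty by blast
  moreover have sub: "?C1 \<union> ?C2 \<subseteq> {C. is_cycle V E C}"
    using is_cycle_mono assms(2,3) by blast
  moreover have fin: "finite {C. is_cycle V E C}" by (rule finite_cycles[OF assms(1)])
  ultimately have "card ?C1 + card ?C2 = card (?C1 \<union> ?C2)"
    by (intro card_Un_disjoint[symmetric]) (auto intro: finite_subset)
  also have "\<dots> \<le> card {C. is_cycle V E C}" using sub fin by (rule card_mono[rotated])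
  finally show ?thesis using edges verts assms(5,6) by linarith
qed

lemma adj_relI: "{a, b} \<in> E \<Longrightarrow> a \<noteq> b \<Longrightarrow> (a, b) \<in> adj_rel E"
  by (simp add: adj_rel_def)

lemma reachable_subset:
  assumes "simple_graph V E" "u \<in> V"
  shows "{x. (u, x) \<in> (adj_rel E)\<^sup>*} \<subseteq> V"
proof
  fix x assume "x \<in> {x. (u, x) \<in> (adj_rel E)\<^sup>*}"
  then have "(u, x) \<in> (adj_rel E)\<^sup>*" by simp
  then show "x \<in> V"
  proof (induction rule: rtrancl_induct)
    case (step y z)
    then show ?case using simple_graph_edgeD(3)[OF assms(1), of y z] by (simp add: adj_rel_def)
  qed (rule assms(2))
qed

lemma split_at_unreachable:
  assumes "simple_graph V E" "u \<in> V" "v \<in> V" "(u, v) \<notin> (adj_rel E)\<^sup>*"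
  obtains X E1 E2 where "X \<subseteq> V" "u \<in> X" "v \<in> V - X" "E = E1 \<union> E2" "E1 \<inter> E2 = {}"
    "simple_graph X E1" "simple_graph (V - X) E2"
proof -
  define X where "X = {x. (u, x) \<in> (adj_rel E)\<^sup>*}"
  have XV: "X \<subseteq> V" using reachable_subset[OF assms(1,2)] unfolding X_def .
  have split: "e \<subseteq> X \<or> e \<subseteq> V - X" and ne: "e \<noteq> {}" if "e \<in> E" for e
  proof -
    obtain a b where ab: "e = {a, b}" "a \<noteq> b" "a \<in> V" "b \<in> V"
      using assms(1) \<open>e \<in> E\<close> unfolding simple_graph_def by blast
    have "(a, b) \<in> adj_rel E" "(b, a) \<in> adj_rel E"
      using ab \<open>e \<in> E\<close> by (auto intro!: adj_relI simp: insert_commute)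
    then have "a \<in> X \<longleftrightarrow> b \<in> X"
      unfolding X_def mem_Collect_eq by (meson rtrancl.rtrancl_into_rtrancl)
    then show "e \<subseteq> X \<or> e \<subseteq> V - X" using ab by auto
    show "e \<noteq> {}" using ab by simp
  qed
  show ?thesis
  proof (rule that[of X "{e \<in> E. e \<subseteq> X}" "{e \<in> E. e \<subseteq> V - X}"])
    show "X \<subseteq> V" "u \<in> X" "v \<in> V - X" using XV assms(3,4) by (simp_all add: X_def)
    show "E = {e \<in> E. e \<subseteq> X} \<union> {e \<in> E. e \<subseteq> V - X}" using split by blast
    show "{e \<in> E. e \<subseteq> X} \<inter> {e \<in> E. e \<subseteq> V - X} = {}" using ne by blast
    show "simple_graph X {e \<in> E. e \<subseteq> X}"
      using assms(1) XV by (rule simple_graph_subgraph) auto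
    show "simple_graph (V - X) {e \<in> E. e \<subseteq> V - X}"
      using assms(1) by (rule simple_graph_subgraph) auto
  qed
qed

lemma cyclomatic_bound:
  assumes "simple_graph V E" "V \<noteq> {}"
  shows "card E + 1 \<le> card V + card {C. is_cycle V E C}"
  using assms
proof (induction "card E" arbitrary: V E rule: less_induct)
  case less
  have finV: "finite V" using less.prems(1) by (simp add: simple_graph_def)
  show ?case
  proof (cases "E = {}")
    case True
    then show ?thesis using less.prems(2) finV by (simp add: Suc_leI card_gt_0_iff)
  next
    case False
    then obtain e where "e \<in> E" by blast
    then obtain u v where uv: "{u, v} \<in> E"
      using less.prems(1) unfolding simple_graph_def by (metis (no_types, lifting))
    define E0 where "E0 = E - {{u, v}}"
    have cardE: "card E = Suc (card E0)"
      unfolding E0_def by (rule card_Suc_Diff1[symmetric, OF simple_graph_finite_edges[OF less.prems(1)] uv])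
    have sg0: "simple_graph V E0" using less.prems(1) by (rule simple_graph_edge_subset) (simp add: E0_def)
    have IH: "card E' + 1 \<le> card V' + card {C. is_cycle V' E' C}"
      if "E' \<subseteq> E0" "simple_graph V' E'" "V' \<noteq> {}" for V' E'
    proof (rule less.hyps)
      have "card E' \<le> card E0"
        using that(1) simple_graph_finite_edges[OF sg0] by (rule card_mono[rotated])
      then show "card E' < card E" using cardE by simp
    qed (use that in blast)+
    show ?thesis
    proof (cases "(u, v) \<in> (adj_rel E0)\<^sup>*")
      case True
      then obtain C where "is_cycle V E C" "{u, v} \<in> C"
        using cycle_through_edge_if_reachable_without[OF less.prems(1) uv] unfolding E0_def by blast
      then have "card {C. is_cycle V E0 C} < card {C. is_cycle V E C}"
        unfolding E0_def by (rule card_cycles_less_if_cycle_edge_removed[OF less.prems(1)])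
      then show ?thesis using IH[OF _ sg0 less.prems(2)] cardE by simp
    next
      case False
      then obtain X E1 E2 where split: "X \<subseteq> V" "u \<in> X" "v \<in> V - X" "E0 = E1 \<union> E2"
        "E1 \<inter> E2 = {}" "simple_graph X E1" "simple_graph (V - X) E2"
        using split_at_unreachable[OF sg0 simple_graph_edgeD(2,3)[OF less.prems(1) uv]] by blast
      have part1: "card E1 + 1 \<le> card X + card {C. is_cycle X E1 C}"
        using split by (intro IH) auto
      have part2: "card E2 + 1 \<le> card (V - X) + card {C. is_cycle (V - X) E2 C}"
        using split by (intro IH) auto
      have "E1 \<union> E2 \<subseteq> E" using split(4) by (auto simp: E0_def)
      from cyclomatic_bound_disjoint_parts[OF less.prems(1) split(1) this split(5) part1 part2]
      show ?thesis using cardE split(4) by simp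
    qed
  qed
qed

section \<open>Graphs with edge-disjoint cycles are 3-colourable\<close>

lemma pairwise_disjnt_cycles_mono:
  assumes "pairwise disjnt {C. is_cycle V E C}" "V' \<subseteq> V" "E' \<subseteq> E"
  shows "pairwise disjnt {C. is_cycle V' E' C}"
  using is_cycle_mono[OF _ assms(2,3)] by (intro pairwise_subset[OF assms(1)]) blast

lemma card_cycles_le:
  assumes "simple_graph V E" "pairwise disjnt {C. is_cycle V E C}"
  shows "3 * card {C. is_cycle V E C} \<le> card E"
proof -
  let ?Cs = "{C. is_cycle V E C}"
  have finE: "finite E" by (rule simple_graph_finite_edges[OF assms(1)])
  have "3 \<le> card C" if "C \<in> ?Cs" for C
    using that card_cycle_edges unfolding is_cycle_def by auto
  then have "of_nat (card ?Cs) * 3 \<le> sum card ?Cs" by (rule sum_bounded_below) simp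
  also have "sum card ?Cs = card (\<Union>?Cs)"
  proof (rule card_Union_disjoint[OF assms(2), symmetric])
    show "finite C" if "C \<in> ?Cs" for C
      using that finite_subset[OF is_cycle_subset_edges finE] by blast
  qed
  also have "\<dots> \<le> card E" using is_cycle_subset_edges finE by (intro card_mono) auto
  finally show ?thesis by simp
qed

lemma card_arcs_le:
  assumes "finite E"
  shows "finite {(x, y). {x, y} \<in> E}" "card {(x, y). {x, y} \<in> E} \<le> 2 * card E"
proof -
  have arcs: "{(x, y). {x, y} \<in> E} = (\<Union>e\<in>E. {(x, y). {x, y} = e})" by auto
  have pair: "finite {(x, y). {x, y} = e} \<and> card {(x, y). {x, y} = e} \<le> 2" for e :: "'a set"
  proof (cases "\<exists>a b. e = {a, b}")
    case True
    then obtain a b where "e = {a, b}" by blast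
    then have sub: "{(x, y). {x, y} = e} \<subseteq> {(a, b), (b, a)}" by (auto simp: doubleton_eq_iff)
    have "card {(a, b), (b, a)} \<le> 2" by (rule card_insert_le_m1) simp_all
    then show ?thesis using card_mono[OF _ sub] finite_subset[OF sub] by fastforce
  next
    case False
    then have "{(x, y). {x, y} = e} = {}" by auto
    then show ?thesis by simp
  qed
  show "finite {(x, y). {x, y} \<in> E}" unfolding arcs using assms pair by blast
  have "card {(x, y). {x, y} \<in> E} \<le> (\<Sum>e\<in>E. card {(x, y). {x, y} = e})"
    unfolding arcs using assms by (rule card_UN_le)
  also have "\<dots> \<le> (\<Sum>e\<in>E. 2)" using pair by (intro sum_mono) blast
  finally show "card {(x, y). {x, y} \<in> E} \<le> 2 * card E" by simp
qed

lemma nbhd_subset: "simple_graph V E \<Longrightarrow> nbhd E x \<subseteq> V"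
  using simple_graph_edgeD(3) by (fastforce simp: nbhd_def)

lemma sum_degree_le:
  assumes "simple_graph V E"
  shows "(\<Sum>x\<in>V. card (nbhd E x)) \<le> 2 * card E"
proof -
  have finV: "finite V" using assms by (simp add: simple_graph_def)
  note arcs = card_arcs_le[OF simple_graph_finite_edges[OF assms]]
  have "(\<Sum>x\<in>V. card (nbhd E x)) = card (Sigma V (nbhd E))"
    using finV finite_subset[OF nbhd_subset[OF assms] finV] by simp
  also have "\<dots> \<le> card {(x, y). {x, y} \<in> E}"
    using arcs(1) by (rule card_mono) (auto simp: nbhd_def)
  also have "\<dots> \<le> 2 * card E" by (rule arcs(2))
  finally show ?thesis .
qed

lemma low_degree_vertex:
  assumes "simple_graph V E" "pairwise disjnt {C. is_cycle V E C}" "V \<noteq> {}"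
  shows "\<exists>x\<in>V. card (nbhd E x) \<le> 2"
proof (rule ccontr)
  assume "\<not> (\<exists>x\<in>V. card (nbhd E x) \<le> 2)"
  then have "3 \<le> card (nbhd E x)" if "x \<in> V" for x using that by force
  then have "of_nat (card V) * 3 \<le> (\<Sum>x\<in>V. card (nbhd E x))" by (rule sum_bounded_below)
  then have "3 * card V \<le> (\<Sum>x\<in>V. card (nbhd E x))" by simp
  then show False
    using sum_degree_le[OF assms(1)] card_cycles_le[OF assms(1,2)] cyclomatic_bound[OF assms(1,3)]
    by linarith
qed

lemma colour_avoiding:
  fixes col :: "'a \<Rightarrow> nat"
  assumes "finite X" "card X \<le> 2"
  obtains c where "c \<in> {1, 2, 3}" "c \<notin> col ` X"
proof -
  have small: "card (col ` X) \<le> 2" using card_image_le[OF assms(1)] assms(2) by (rule le_trans)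
  have "\<not> {1, 2, 3} \<subseteq> col ` X"
  proof
    assume "{1, 2, 3} \<subseteq> col ` X"
    then have "card {1, 2, 3 :: nat} \<le> card (col ` X)" using assms(1) by (intro card_mono) auto
    then show False using small by simp
  qed
  then show ?thesis using that by blast
qed

lemma proper_colouring_extend:
  assumes "simple_graph V E" "\<forall>y z. {y, z} \<in> E \<and> x \<notin> {y, z} \<longrightarrow> col y \<noteq> col z"
    and "c \<notin> col ` nbhd E x"
  shows "\<forall>y z. {y, z} \<in> E \<longrightarrow> (col(x := c)) y \<noteq> (col(x := c)) z"
proof (intro allI impI)
  fix y z assume yz: "{y, z} \<in> E"
  have "y \<noteq> z" using simple_graph_edgeD(1)[OF assms(1) yz] .
  moreover have "y = x \<Longrightarrow> z \<in> nbhd E x" "z = x \<Longrightarrow> y \<in> nbhd E x"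
    using yz \<open>y \<noteq> z\<close> by (auto simp: nbhd_def insert_commute)
  ultimately show "(col(x := c)) y \<noteq> (col(x := c)) z" using yz assms(2,3) by auto
qed

lemma three_colouring:
  assumes "simple_graph V E" "pairwise disjnt {C. is_cycle V E C}"
  shows "\<exists>col. col ` V \<subseteq> {1, 2, 3 :: nat} \<and> (\<forall>x y. {x, y} \<in> E \<longrightarrow> col x \<noteq> col y)"
  using assms
proof (induction "card V" arbitrary: V E rule: less_induct)
  case less
  show ?case
  proof (cases "V = {}")
    case True
    then have "E = {}" using less.prems(1) by (auto simp: simple_graph_def)
    then show ?thesis using True by auto
  next
    case False
    obtain x where x: "x \<in> V" "card (nbhd E x) \<le> 2"
      using low_degree_vertex[OF less.prems False] by blast
    define V0 where "V0 = V - {x}"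
    define E0 where "E0 = {e \<in> E. x \<notin> e}"
    have "card V0 < card V"
      unfolding V0_def using less.prems(1) x(1) by (intro card_Diff1_less) (simp_all add: simple_graph_def)
    moreover have "simple_graph V0 E0"
      using less.prems(1) by (rule simple_graph_subgraph)
        (auto simp: V0_def E0_def dest: simple_graph_edges_subset[OF less.prems(1)])
    moreover have "pairwise disjnt {C. is_cycle V0 E0 C}"
      using less.prems(2) by (rule pairwise_disjnt_cycles_mono) (auto simp: V0_def E0_def)
    ultimately have "\<exists>col. col ` V0 \<subseteq> {1, 2, 3 :: nat} \<and> (\<forall>y z. {y, z} \<in> E0 \<longrightarrow> col y \<noteq> col z)"
      by (rule less.hyps)
    then obtain col0 where col0: "col0 ` V0 \<subseteq> {1, 2, 3 :: nat}"
      "\<forall>y z. {y, z} \<in> E0 \<longrightarrow> col0 y \<noteq> col0 z" by blast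
    have "finite (nbhd E x)"
      using finite_subset[OF nbhd_subset[OF less.prems(1)]] less.prems(1) by (simp add: simple_graph_def)
    then obtain c where c: "c \<in> {1, 2, 3}" "c \<notin> col0 ` nbhd E x"
      using colour_avoiding[OF _ x(2)] by blast
    have "\<forall>y z. {y, z} \<in> E \<longrightarrow> (col0(x := c)) y \<noteq> (col0(x := c)) z"
      using col0(2) c(2) by (intro proper_colouring_extend[OF less.prems(1)]) (simp add: E0_def)
    moreover have "col0(x := c) ` V \<subseteq> {1, 2, 3}" using col0(1) c(1) by (auto simp: V0_def)
    ultimately show ?thesis by blast
  qed
qed

section \<open>Cable paths\<close>

definition path_edges :: "'a list \<Rightarrow> 'a set set" where
  "path_edges ps = {{ps ! i, ps ! (i + 1)} | i. i + 1 < length ps}"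

lemma path_edgeI: "i + 1 < length ps \<Longrightarrow> {ps ! i, ps ! (i + 1)} \<in> path_edges ps"
  unfolding path_edges_def by blast

lemma is_path_iff:
  "is_path V E ps \<longleftrightarrow> ps \<noteq> [] \<and> distinct ps \<and> set ps \<subseteq> V \<and> path_edges ps \<subseteq> E"
  unfolding is_path_def path_edges_def by blast

lemma rev_nth_pair:
  assumes "k + 1 < length ps"
  shows "rev ps ! (length ps - 2 - k) = ps ! (k + 1)" "rev ps ! (length ps - 2 - k + 1) = ps ! k"
  using assms by (simp_all add: rev_nth Suc_diff_Suc numeral_2_eq_2)

lemma path_edges_first_vertex:
  assumes "distinct ps" "{ps ! 0, w} \<in> path_edges ps"
  shows "w = ps ! 1"
proof -
  obtain i where i: "i + 1 < length ps" "{ps ! 0, w} = {ps ! i, ps ! (i + 1)}"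
    using assms(2) by (auto simp: path_edges_def)
  have "ps ! 0 \<noteq> ps ! (i + 1)" using i(1) assms(1) by (intro distinct_nth_neq) auto
  then have "ps ! 0 = ps ! i" "w = ps ! (i + 1)" using i(2) by (auto simp: doubleton_eq_iff)
  moreover have "i = 0"
  proof (rule ccontr)
    assume "i \<noteq> 0"
    then have "ps ! 0 \<noteq> ps ! i" using i(1) assms(1) by (intro distinct_nth_neq) auto
    then show False using \<open>ps ! 0 = ps ! i\<close> by simp
  qed
  ultimately show ?thesis by simp
qed

lemma path_edges_rev_subset: "path_edges (rev ps) \<subseteq> path_edges ps"
proof
  fix e assume "e \<in> path_edges (rev ps)"
  then obtain i where i: "i + 1 < length ps" "e = {rev ps ! i, rev ps ! (i + 1)}"
    by (auto simp: path_edges_def)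
  define j where "j = length ps - 2 - i"
  have "j + 1 < length ps" "i = length ps - 2 - j" using i(1) by (auto simp: j_def)
  then show "e \<in> path_edges ps"
    using i(2) path_edgeI rev_nth_pair by (metis insert_commute)
qed

lemma path_edges_rev: "path_edges (rev ps) = path_edges ps"
  using path_edges_rev_subset[of ps] path_edges_rev_subset[of "rev ps"] by simp

lemma is_path_rev: "is_path V E ps \<Longrightarrow> is_path V E (rev ps)"
  by (simp add: is_path_iff path_edges_rev)

lemma cable_path_rev:
  assumes "cable_path V E ps"
  shows "cable_path V E (rev ps)"
  unfolding cable_path_def
proof (intro conjI allI impI)
  show "is_path V E (rev ps)" using assms by (simp add: cable_path_def is_path_rev)
  fix i assume i: "0 < i \<and> i + 1 < length (rev ps)"
  define k where "k = length ps - 1 - i"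
  have k: "0 < k" "k + 1 < length ps" using i by (auto simp: k_def)
  have "rev ps ! i = ps ! k" "rev ps ! (i - 1) = ps ! (k + 1)" "rev ps ! (i + 1) = ps ! (k - 1)"
    using i by (auto simp: k_def rev_nth Suc_diff_Suc)
  moreover have "nbhd E (ps ! k) = {ps ! (k - 1), ps ! (k + 1)}"
    using assms k unfolding cable_path_def by blast
  ultimately show "nbhd E (rev ps ! i) = {rev ps ! (i - 1), rev ps ! (i + 1)}"
    by (simp add: insert_commute)
qed

lemma cable_paths_agree:
  assumes P: "cable_path V E P" and Q: "cable_path V E Q"
    and start: "P ! 0 = Q ! 0" "P ! 1 = Q ! 1"
  shows "i < length P \<Longrightarrow> i < length Q \<Longrightarrow> P ! i = Q ! i"
proof (induction i rule: less_induct)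
  case (less i)
  show ?case
  proof (cases "i < 2")
    case True
    then show ?thesis using start by (auto simp: less_2_cases_iff)
  next
    case False
    then obtain k where k: "i = k + 2" by (metis add.commute le_add_diff_inverse not_less)
    have same: "P ! k = Q ! k" "P ! (k + 1) = Q ! (k + 1)" using less k by auto
    have "nbhd E (P ! (k + 1)) = {P ! k, P ! (k + 2)}" "nbhd E (Q ! (k + 1)) = {Q ! k, Q ! (k + 2)}"
      using P Q less.prems k unfolding cable_path_def by auto
    moreover have "P ! k \<noteq> P ! (k + 2)"
      using P less.prems k by (intro distinct_nth_neq) (auto simp: cable_path_def is_path_def)
    ultimately show ?thesis using same k by (auto simp: doubleton_eq_iff)
  qed
qed

lemma cable_path_next_edge_in_cycle:
  assumes "cable_path V E P" "is_cycle V E C" "j + 2 < length P" "{P ! j, P ! (j + 1)} \<in> C"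
  shows "{P ! (j + 1), P ! (j + 2)} \<in> C"
proof -
  obtain vs where vs: "distinct vs" "length vs \<ge> 3" "C = cycle_edges vs" "C \<subseteq> E"
    using assms(2) unfolding is_cycle_def by blast
  have "P ! (j + 1) \<in> set vs" using assms(4) cycle_edges_subset vs(3) by blast
  then obtain y z where yz: "y \<noteq> z" "P ! (j + 1) \<noteq> y" "P ! (j + 1) \<noteq> z"
    "{P ! (j + 1), y} \<in> C" "{P ! (j + 1), z} \<in> C"
    using cycle_two_neighbours[OF vs(1,2)] unfolding vs(3) by metis
  have "y \<in> nbhd E (P ! (j + 1))" "z \<in> nbhd E (P ! (j + 1))"
    using yz vs(4) by (auto simp: nbhd_def)
  moreover have "nbhd E (P ! (j + 1)) = {P ! j, P ! (j + 2)}"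
    using assms(1,3) unfolding cable_path_def by auto
  ultimately have "P ! (j + 2) \<in> {y, z}" using yz(1) by auto
  then show ?thesis using yz(4,5) by auto
qed

lemma cable_path_edges_in_cycle:
  assumes "cable_path V E P" "is_cycle V E C" "j + 1 < length P" "{P ! j, P ! (j + 1)} \<in> C"
  shows "path_edges P \<subseteq> C"
proof -
  have forward: "{Q ! i, Q ! (i + 1)} \<in> C"
    if Q: "cable_path V E Q" "{Q ! j', Q ! (j' + 1)} \<in> C" and "j' \<le> i" "i + 1 < length Q" for Q j' i
    using that(3,4)
  proof (induction i rule: dec_induct)
    case base
    show ?case by (rule Q(2))
  next
    case (step n)
    then show ?case using cable_path_next_edge_in_cycle[OF Q(1) assms(2), of n] by simp
  qed
  show ?thesis
  proof
    fix e assume "e \<in> path_edges P"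
    then obtain i where i: "i + 1 < length P" "e = {P ! i, P ! (i + 1)}"
      by (auto simp: path_edges_def)
    show "e \<in> C"
    proof (cases "j \<le> i")
      case True
      then show ?thesis using forward[OF assms(1,4) True i(1)] i(2) by simp
    next
      case False
      let ?m = "\<lambda>k. length P - 2 - k"
      have "{rev P ! ?m j, rev P ! (?m j + 1)} \<in> C"
        using assms(4) rev_nth_pair[OF assms(3)] by (simp add: insert_commute)
      then have "{rev P ! ?m i, rev P ! (?m i + 1)} \<in> C"
        using forward[OF cable_path_rev[OF assms(1)]] False i(1) by simp
      then show ?thesis using i rev_nth_pair[OF i(1)] by (simp add: insert_commute)
    qed
  qed
qed

section \<open>Colourings agreeing with a fixed colouring on a set\<close>

lemma prob_PiE_agrees_on_ge:
  fixes C :: "'b set" and g :: "'a \<Rightarrow> 'b"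
  assumes "finite V" "finite C" "C \<noteq> {}" "S \<subseteq> V" "\<forall>v\<in>S. g v \<in> C"
    and "\<And>f. f \<in> PiE V (\<lambda>_. C) \<Longrightarrow> \<forall>v\<in>S. f v = g v \<Longrightarrow> f \<in> A"
  shows "1 / real (card C) ^ card S \<le> measure_pmf.prob (pmf_of_set (PiE V (\<lambda>_. C))) A"
proof -
  let ?\<Omega> = "PiE V (\<lambda>_. C)"
  let ?B = "PiE V (\<lambda>v. if v \<in> S then {g v} else C)"
  have "?B \<subseteq> ?\<Omega> \<inter> A"
  proof
    fix f assume f: "f \<in> ?B"
    then have "f \<in> ?\<Omega>" using assms(5) by (auto simp: PiE_iff split: if_splits)
    moreover have "\<forall>v\<in>S. f v = g v" using PiE_mem[OF f] assms(4) by fastforce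
    ultimately show "f \<in> ?\<Omega> \<inter> A" using assms(6) by blast
  qed
  moreover have fin: "finite ?\<Omega>" using assms(1,2) by (simp add: finite_PiE)
  ultimately have le: "card ?B \<le> card (?\<Omega> \<inter> A)" by (intro card_mono) auto
  have "card ?B = (\<Prod>v\<in>V. card (if v \<in> S then {g v} else C))"
    using assms(1) by (simp add: card_PiE)
  also have "\<dots> = (\<Prod>v\<in>V. if v \<in> S then 1 else card C)" by (intro prod.cong) auto
  also have "\<dots> = card C ^ card (V - S)"
    using assms(1) by (simp add: prod.If_cases Diff_eq)
  finally have card_B: "card ?B = card C ^ (card V - card S)"
    using assms(1,4) by (simp add: card_Diff_subset finite_subset)
  have card_\<Omega>: "card ?\<Omega> = card C ^ card V" using assms(1) by (simp add: card_PiE)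
  have "card S \<le> card V" using assms(1,4) by (rule card_mono)
  then have "real (card ?\<Omega>) = real (card C) ^ (card V - card S) * real (card C) ^ card S"
    by (simp add: card_\<Omega> power_add[symmetric])
  moreover have "real (card C) > 0" using assms(2,3) by (simp add: card_gt_0_iff)
  ultimately have "1 / real (card C) ^ card S = real (card ?B) / real (card ?\<Omega>)"
    by (simp add: card_B)
  also have "\<dots> \<le> real (card (?\<Omega> \<inter> A)) / real (card ?\<Omega>)"
    using le by (intro divide_right_mono) simp_all
  also have "\<dots> = measure_pmf.prob (pmf_of_set ?\<Omega>) A"
    using fin assms(3) by (simp add: measure_pmf_of_set PiE_eq_empty_iff)
  finally show ?thesis .
qed

section \<open>Witness sets, big witness sets and cables of the contracted graph\<close>

lemma witness_of_eq:
  assumes "u \<in> witness_of F v"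
  shows "witness_of F u = witness_of F v"
proof -
  have "sym ((adj_rel F)\<^sup>*)"
    by (rule sym_rtrancl) (auto simp: sym_def adj_rel_def insert_commute)
  moreover have vu: "(v, u) \<in> (adj_rel F)\<^sup>*" using assms by (simp add: witness_of_def)
  ultimately have "(u, v) \<in> (adj_rel F)\<^sup>*" by (rule symD)
  then show ?thesis using vu unfolding witness_of_def by (auto intro: rtrancl_trans)
qed

lemma witness_of_subset: "simple_graph V F \<Longrightarrow> v \<in> V \<Longrightarrow> witness_of F v \<subseteq> V"
  unfolding witness_of_def by (rule reachable_subset)

lemma in_Union_if_card_witness_of_ge2:
  assumes "card (witness_of F v) \<ge> 2"
  shows "v \<in> \<Union>F"
proof -
  have "\<not> witness_of F v \<subseteq> {v}"
  proof
    assume "witness_of F v \<subseteq> {v}"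
    then have "card (witness_of F v) \<le> card {v}" by (intro card_mono) simp_all
    then show False using assms by simp
  qed
  then obtain u where "(v, u) \<in> (adj_rel F)\<^sup>*" "u \<noteq> v" by (auto simp: witness_of_def)
  then have "(v, u) \<in> (adj_rel F)\<^sup>+" by (simp add: rtrancl_eq_or_trancl)
  then obtain x where "(v, x) \<in> adj_rel F" by (auto dest: tranclD)
  then show ?thesis by (auto simp: adj_rel_def)
qed

lemma cactus_cycles_disjoint: "cactus V E \<Longrightarrow> pairwise disjnt {C. is_cycle V E C}"
  unfolding cactus_def pairwise_def disjnt_def using is_cycle_subset_edges by blast

locale contraction =
  fixes V :: "'v set" and E F :: "'v set set"
  assumes simple: "simple_graph V E" and F_subset: "F \<subseteq> E"
    and T_cycles_disjoint:
      "pairwise disjnt {C. is_cycle (witness_structure V F) (contract_edges V E F) C}"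
begin

abbreviation "TV \<equiv> witness_structure V F"
abbreviation "TE \<equiv> contract_edges V E F"

lemma finite_V: "finite V"
  using simple by (simp add: simple_graph_def)

lemma simple_F: "simple_graph V F"
  by (rule simple_graph_edge_subset[OF simple F_subset])

lemma finite_F: "finite F"
  by (rule simple_graph_finite_edges[OF simple_F])

lemma witness_set:
  assumes "W \<in> TV"
  shows "W \<subseteq> V" "finite W" "a \<in> W \<Longrightarrow> witness_of F a = W"
proof -
  obtain w where w: "w \<in> V" "W = witness_of F w"
    using assms by (auto simp: witness_structure_def)
  show "W \<subseteq> V" using witness_of_subset[OF simple_F w(1)] w(2) by simp
  then show "finite W" using finite_V by (rule finite_subset)
  show "a \<in> W \<Longrightarrow> witness_of F a = W" using witness_of_eq w(2) by simp
qed

lemma simple_T: "simple_graph TV TE"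
  unfolding simple_graph_def
proof
  show "finite TV" using finite_V by (simp add: witness_structure_def)
  show "\<forall>e\<in>TE. \<exists>A B. e = {A, B} \<and> A \<noteq> B \<and> A \<in> TV \<and> B \<in> TV"
    unfolding contract_edges_def by blast
qed

lemma finite_TV: "finite TV"
  using simple_T by (simp add: simple_graph_def)

definition big :: "'v set set" where
  "big = {W \<in> TV. card W \<ge> 2}"

definition big_edges :: "'v set set set" where
  "big_edges = {e \<in> TE. e \<subseteq> big}"

lemma big_subset: "big \<subseteq> TV"
  by (auto simp: big_def)

lemma card_Union_big_le: "card (\<Union>big) \<le> 2 * card F"
proof -
  have "\<Union>big \<subseteq> \<Union>F"
  proof
    fix v assume "v \<in> \<Union>big"
    then obtain W where W: "W \<in> big" "v \<in> W" by blast
    then have "witness_of F v = W" using witness_set(3) big_subset by blast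
    then show "v \<in> \<Union>F" using W(1) in_Union_if_card_witness_of_ge2 by (auto simp: big_def)
  qed
  moreover have two: "card e = 2" if "e \<in> F" for e
    using simple_F that unfolding simple_graph_def by auto
  then have "finite e" if "e \<in> F" for e using that by (simp add: card_ge_0_finite)
  then have "finite (\<Union>F)" using finite_F by blast
  ultimately have "card (\<Union>big) \<le> card (\<Union>F)" by (rule card_mono[rotated])
  also have "\<dots> \<le> sum card F" by (rule card_Union_le_sum_card)
  also have "\<dots> = 2 * card F" using two by simp
  finally show ?thesis .
qed

lemma card_big_le: "2 * card big \<le> card (\<Union>big)"
proof -
  have "pairwise disjnt big"
    unfolding pairwise_def disjnt_def using witness_set(3) big_subset by blast
  moreover have "finite W" if "W \<in> big" for W using that witness_set(2) big_subset by blast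
  ultimately have "card (\<Union>big) = sum card big" by (rule card_Union_disjoint)
  moreover have "of_nat (card big) * 2 \<le> sum card big" by (rule sum_bounded_below) (simp add: big_def)
  ultimately show ?thesis by simp
qed

text \<open>The cable paths constrained by clause (3) of compatibility.\<close>

definition cables :: "'v set list set" where
  "cables = {ps. cable_path TV TE ps \<and> length ps \<ge> 3 \<and> card (hd ps) \<ge> 2 \<and> card (last ps) \<ge> 2 \<and>
     (\<forall>i. 0 < i \<and> i + 1 < length ps \<longrightarrow> card (ps ! i) = 1)}"

lemma cablesD:
  assumes "P \<in> cables"
  shows "cable_path TV TE P" "distinct P" "set P \<subseteq> TV" "length P \<ge> 3" "path_edges P \<subseteq> TE"
    "P ! 0 \<in> big" "P ! (length P - 1) \<in> big"
    "\<And>i. 0 < i \<Longrightarrow> i + 1 < length P \<Longrightarrow> card (P ! i) = 1"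
    "\<And>i. 0 < i \<Longrightarrow> i + 1 < length P \<Longrightarrow> nbhd TE (P ! i) = {P ! (i - 1), P ! (i + 1)}"
    "P \<noteq> []"
proof -
  show path: "cable_path TV TE P" and len: "length P \<ge> 3"
    and "\<And>i. 0 < i \<Longrightarrow> i + 1 < length P \<Longrightarrow> card (P ! i) = 1"
    using assms by (simp_all add: cables_def)
  then show "distinct P" and sub: "set P \<subseteq> TV" and "path_edges P \<subseteq> TE"
    "\<And>i. 0 < i \<Longrightarrow> i + 1 < length P \<Longrightarrow> nbhd TE (P ! i) = {P ! (i - 1), P ! (i + 1)}"
    by (simp_all add: cable_path_def is_path_iff)
  show ne: "P \<noteq> []" using len by auto
  moreover have "P ! 0 \<in> set P" "P ! (length P - 1) \<in> set P"
    using nth_mem[of 0 P] nth_mem[of "length P - 1" P] len by linarith+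
  ultimately show "P ! 0 \<in> big" "P ! (length P - 1) \<in> big"
    using assms sub by (auto simp: cables_def big_def hd_conv_nth last_conv_nth)
qed

lemma finite_cables: "finite cables"
proof -
  have "cables \<subseteq> {ps. set ps \<subseteq> TV \<and> distinct ps}" using cablesD(2,3) by blast
  then show ?thesis using finite_TV by (auto intro: finite_subset finite_subset_distinct)
qed

lemma rev_in_cables:
  assumes "P \<in> cables"
  shows "rev P \<in> cables"
proof -
  have len: "length P \<ge> 3" by (rule cablesD(4)[OF assms])
  have "card (rev P ! i) = 1" if "0 < i" "i + 1 < length P" for i
    using that cablesD(8)[OF assms, of "length P - 1 - i"] by (simp add: rev_nth)
  moreover note cablesD(10)[OF assms]
  ultimately show ?thesis
    using assms cable_path_rev[OF cablesD(1)[OF assms]] by (simp add: cables_def hd_rev last_rev)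
qed

lemma rev_cable_neq:
  assumes "P \<in> cables"
  shows "rev P \<noteq> P"
proof
  have ends: "P ! 0 \<noteq> P ! (length P - 1)"
    using cablesD(2,4)[OF assms] by (intro distinct_nth_neq) auto
  assume "rev P = P"
  then have "P ! 0 = rev P ! 0" by simp
  also have "\<dots> = P ! (length P - 1)" using cablesD(10)[OF assms] by (simp add: rev_nth)
  finally show False using ends by simp
qed

lemma cables_eq_if_starts_eq:
  assumes P: "P \<in> cables" and Q: "Q \<in> cables" and start: "P ! 0 = Q ! 0" "P ! 1 = Q ! 1"
  shows "P = Q"
proof -
  note agree = cable_paths_agree[OF cablesD(1)[OF P] cablesD(1)[OF Q] start]
  have "\<not> length P < length Q" if "P \<in> cables" "Q \<in> cables"
    and agree: "\<And>i. i < length P \<Longrightarrow> i < length Q \<Longrightarrow> P ! i = Q ! i" for P Q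
  proof
    assume lt: "length P < length Q"
    let ?m = "length P - 1"
    have "P ! ?m = Q ! ?m" using agree lt cablesD(4)[OF that(1)] by simp
    moreover have "card (Q ! ?m) = 1" using cablesD(8)[OF that(2), of ?m] lt cablesD(4)[OF that(1)] by simp
    ultimately show False using cablesD(7)[OF that(1)] by (simp add: big_def)
  qed
  then have "length P = length Q" using P Q agree by (metis linorder_neqE_nat)
  then show ?thesis using agree by (simp add: nth_equalityI)
qed

definition cable_inner :: "'v set set" where
  "cable_inner = {P ! i | P i. P \<in> cables \<and> 0 < i \<and> i + 1 < length P}"

definition cable_edges :: "'v set set set" where
  "cable_edges = \<Union>(path_edges ` cables)"

lemma card_cable_inner: "W \<in> cable_inner \<Longrightarrow> card W = 1"
  unfolding cable_inner_def using cablesD(8) by blast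

lemma cable_vertex:
  assumes "P \<in> cables" "i < length P"
  shows "P ! i \<in> big \<union> cable_inner"
proof (cases "0 < i \<and> i + 1 < length P")
  case True
  then show ?thesis using assms(1) unfolding cable_inner_def by blast
next
  case False
  then have "i = 0 \<or> i = length P - 1" using assms(2) by auto
  then show ?thesis using cablesD(6,7)[OF assms(1)] by auto
qed

lemma cable_edgeD:
  assumes "e \<in> cable_edges"
  obtains P i where "P \<in> cables" "i + 1 < length P" "e = {P ! i, P ! (i + 1)}"
  using assms unfolding cable_edges_def path_edges_def by blast

lemma cable_first_edge: "P \<in> cables \<Longrightarrow> {P ! 0, P ! 1} \<in> path_edges P"
  using path_edgeI[of 0 P] cablesD(4)[of P] by simp

lemma cable_verts_subset: "big \<union> cable_inner \<subseteq> TV"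
  using big_subset cablesD(3) by (force simp: cable_inner_def)

lemma cable_edges_subset: "cable_edges \<subseteq> TE"
  using cablesD(5) by (auto simp: cable_edges_def)

lemma simple_cable_graph: "simple_graph (big \<union> cable_inner) cable_edges"
proof (rule simple_graph_subgraph[OF simple_T cable_verts_subset cable_edges_subset])
  show "\<forall>e\<in>cable_edges. e \<subseteq> big \<union> cable_inner"
  proof
    fix e assume "e \<in> cable_edges"
    then obtain P i where "P \<in> cables" "i + 1 < length P" "e = {P ! i, P ! (i + 1)}"
      by (rule cable_edgeD)
    then show "e \<subseteq> big \<union> cable_inner" using cable_vertex by simp
  qed
qed

lemma cable_graph_cycles_disjoint:
  "pairwise disjnt {C. is_cycle (big \<union> cable_inner) cable_edges C}"
  using T_cycles_disjoint cable_verts_subset cable_edges_subset by (rule pairwise_disjnt_cycles_mono)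

lemma finite_nbhd_cable_edges: "finite (nbhd cable_edges W)"
  using finite_subset[OF nbhd_subset[OF simple_cable_graph]] simple_cable_graph
  by (simp add: simple_graph_def)

lemma card_nbhd_cable_inner:
  assumes "W \<in> cable_inner"
  shows "2 \<le> card (nbhd cable_edges W)"
proof -
  obtain P i where P: "P \<in> cables" "0 < i" "i + 1 < length P" "W = P ! i"
    using assms unfolding cable_inner_def by blast
  have "{P ! (i - 1), P ! i} \<in> cable_edges" "{P ! i, P ! (i + 1)} \<in> cable_edges"
    using P path_edgeI[of "i - 1" P] path_edgeI[of i P] by (auto simp: cable_edges_def)
  moreover have "P ! (i - 1) \<noteq> P ! (i + 1)" "P ! (i - 1) \<noteq> P ! i" "P ! (i + 1) \<noteq> P ! i"
    using P by (simp_all add: nth_eq_iff_index_eq[OF cablesD(2)[OF P(1)]])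
  ultimately have "{P ! (i - 1), P ! (i + 1)} \<subseteq> nbhd cable_edges W"
    using P(4) by (auto simp: nbhd_def insert_commute)
  then have "card {P ! (i - 1), P ! (i + 1)} \<le> card (nbhd cable_edges W)"
    using finite_nbhd_cable_edges by (rule card_mono[rotated])
  then show ?thesis using \<open>P ! (i - 1) \<noteq> P ! (i + 1)\<close> by simp
qed

lemma card_cable_arcs: "2 * card cable_inner + card cables \<le> 2 * card cable_edges"
proof -
  let ?arcs = "{(x, y). {x, y} \<in> cable_edges}"
  let ?inner_arcs = "Sigma cable_inner (nbhd cable_edges)"
  let ?start_arcs = "(\<lambda>P. (P ! 0, P ! 1)) ` cables"
  note arcs = card_arcs_le[OF simple_graph_finite_edges[OF simple_cable_graph]]
  have "of_nat (card cable_inner) * 2 \<le> (\<Sum>W\<in>cable_inner. card (nbhd cable_edges W))"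
    using card_nbhd_cable_inner by (rule sum_bounded_below)
  also have "\<dots> = card ?inner_arcs"
    using finite_subset[OF _ finite_TV] cable_verts_subset finite_nbhd_cable_edges
    by (intro card_SigmaI[symmetric]) auto
  finally have inner: "2 * card cable_inner \<le> card ?inner_arcs" by simp
  have "inj_on (\<lambda>P. (P ! 0, P ! 1)) cables"
    by (rule inj_onI) (use cables_eq_if_starts_eq in auto)
  then have start: "card ?start_arcs = card cables" by (rule card_image)
  have sub: "?inner_arcs \<subseteq> ?arcs" "?start_arcs \<subseteq> ?arcs"
    using cable_first_edge by (auto simp: nbhd_def cable_edges_def)
  have "?inner_arcs \<inter> ?start_arcs = {}"
    using card_cable_inner cablesD(6) by (fastforce simp: big_def)
  then have "card ?inner_arcs + card ?start_arcs = card (?inner_arcs \<union> ?start_arcs)"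
    using sub arcs(1) by (intro card_Un_disjoint[symmetric]) (auto intro: finite_subset)
  also have "\<dots> \<le> card ?arcs" using sub arcs(1) by (intro card_mono) auto
  finally show ?thesis using inner start arcs(2) by linarith
qed

lemma cable_edges_in_cycle:
  assumes C: "is_cycle (big \<union> cable_inner) cable_edges C" and e: "e \<in> C"
  obtains P where "P \<in> cables" "e \<in> path_edges P" "path_edges P \<subseteq> C"
proof -
  have "e \<in> cable_edges" using e is_cycle_subset_edges[OF C] by blast
  then obtain P j where P: "P \<in> cables" "j + 1 < length P" "e = {P ! j, P ! (j + 1)}"
    by (rule cable_edgeD)
  have "is_cycle TV TE C" using C cable_verts_subset cable_edges_subset by (rule is_cycle_mono)
  then have "path_edges P \<subseteq> C"
    using cable_path_edges_in_cycle[OF cablesD(1)[OF P(1)] _ P(2)] P(3) e by blast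
  then show ?thesis using that P path_edgeI by blast
qed

lemma cycle_carries_four_cables:
  assumes C: "is_cycle (big \<union> cable_inner) cable_edges C"
  shows "4 \<le> card {P \<in> cables. path_edges P \<subseteq> C}"
proof -
  obtain vs where vs: "distinct vs" "length vs \<ge> 3" "C = cycle_edges vs"
    using C unfolding is_cycle_def by blast
  obtain e where "e \<in> C" using is_cycle_nonempty[OF C] by blast
  then obtain P where P: "P \<in> cables" "path_edges P \<subseteq> C"
    using cable_edges_in_cycle[OF C] by blast
  have "{P ! 0, P ! 1} \<in> C" using P cable_first_edge by blast
  then have "P ! 0 \<in> set vs" using cycle_edges_subset vs(3) by blast
  then obtain y z where yz: "y \<noteq> z" "P ! 0 \<noteq> y" "P ! 0 \<noteq> z" "{P ! 0, y} \<in> C" "{P ! 0, z} \<in> C"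
    using cycle_two_neighbours[OF vs(1,2)] unfolding vs(3) by metis
  then obtain w where w: "{P ! 0, w} \<in> C" "w \<noteq> P ! 1" by metis
  then obtain Q where Q: "Q \<in> cables" "{P ! 0, w} \<in> path_edges Q" "path_edges Q \<subseteq> C"
    using cable_edges_in_cycle[OF C] by blast
  have "{P ! 0, w} \<notin> path_edges P"
    using path_edges_first_vertex[OF cablesD(2)[OF P(1)]] w(2) by blast
  then have QP: "path_edges Q \<noteq> path_edges P" using Q(2) by blast
  have four: "card {P, rev P, Q, rev Q} = 4"
    using QP rev_cable_neq[OF P(1)] rev_cable_neq[OF Q(1)] path_edges_rev[of P] path_edges_rev[of Q]
    by (auto simp: card_insert_if)
  have "{P, rev P, Q, rev Q} \<subseteq> {P \<in> cables. path_edges P \<subseteq> C}"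
    using P Q rev_in_cables by (simp add: path_edges_rev)
  then have "card {P, rev P, Q, rev Q} \<le> card {P \<in> cables. path_edges P \<subseteq> C}"
    using finite_cables by (intro card_mono) simp_all
  then show ?thesis using four by simp
qed

lemma card_cable_cycles_le: "4 * card {C. is_cycle (big \<union> cable_inner) cable_edges C} \<le> card cables"
proof -
  let ?Cs = "{C. is_cycle (big \<union> cable_inner) cable_edges C}"
  let ?carried = "\<lambda>C. {P \<in> cables. path_edges P \<subseteq> C}"
  have "of_nat (card ?Cs) * 4 \<le> (\<Sum>C\<in>?Cs. card (?carried C))"
    using cycle_carries_four_cables by (intro sum_bounded_below) simp
  also have "\<dots> = card (\<Union>C\<in>?Cs. ?carried C)"
  proof (rule card_UN_disjoint[symmetric])
    show "finite ?Cs" by (rule finite_cycles[OF simple_cable_graph])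
    show "\<forall>C\<in>?Cs. finite (?carried C)" using finite_cables by simp
    show "\<forall>C1\<in>?Cs. \<forall>C2\<in>?Cs. C1 \<noteq> C2 \<longrightarrow> ?carried C1 \<inter> ?carried C2 = {}"
    proof (intro ballI impI)
      fix C1 C2 assume "C1 \<in> ?Cs" "C2 \<in> ?Cs" "C1 \<noteq> C2"
      then have "C1 \<inter> C2 = {}"
        using cable_graph_cycles_disjoint by (simp add: pairwise_def disjnt_def)
      then show "?carried C1 \<inter> ?carried C2 = {}" using cable_first_edge by blast
    qed
  qed
  also have "\<dots> \<le> card cables" using finite_cables by (intro card_mono) auto
  finally show ?thesis by simp
qed

lemma card_cables_le: "card cables \<le> 4 * card big"
proof (cases "cables = {}")
  case False
  then obtain P where "P \<in> cables" by blast
  then have "big \<union> cable_inner \<noteq> {}" using cablesD(6) by blast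
  then have "card cable_edges + 1
      \<le> card (big \<union> cable_inner) + card {C. is_cycle (big \<union> cable_inner) cable_edges C}"
    by (rule cyclomatic_bound[OF simple_cable_graph])
  \<comment> \<open>With e edges, i inner vertices, c cycles and k cables: e + 1 <= |big| + i + c,
    2 i + k <= 2 e and 4 c <= k, hence k <= 4 |big| - 4.\<close>
  then show ?thesis using card_Un_le[of big cable_inner] card_cable_arcs card_cable_cycles_le
    by linarith
qed simp

definition critical :: "'v set" where
  "critical = \<Union>big \<union> \<Union>((\<lambda>P. P ! 1) ` cables)"

lemma cable_secondD:
  assumes "P \<in> cables"
  shows "P ! 1 \<in> TV" "card (P ! 1) = 1"
proof -
  show "card (P ! 1) = 1" using cablesD(4,8)[OF assms] by simp
  have "P ! 1 \<in> set P" using cablesD(4)[OF assms] by (intro nth_mem) linarith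
  then show "P ! 1 \<in> TV" using cablesD(3)[OF assms] by blast
qed

lemma witness_of_critical:
  assumes "v \<in> critical"
  shows "witness_of F v \<in> big \<union> (\<lambda>P. P ! 1) ` cables"
  using assms witness_set(3) big_subset cable_secondD(1) unfolding critical_def by blast

lemma critical_subset: "critical \<subseteq> V"
  using witness_set(1) big_subset cable_secondD(1) unfolding critical_def by blast

lemma card_critical_le: "card critical \<le> 6 * card F"
proof -
  let ?seconds = "(\<lambda>P. P ! 1) ` cables"
  have "card (\<Union>?seconds) \<le> sum card ?seconds" by (rule card_Union_le_sum_card)
  also have "\<dots> = (\<Sum>W\<in>?seconds. 1)" using cable_secondD(2) by (intro sum.cong) auto
  also have "\<dots> = card ?seconds" by simp
  also have "\<dots> \<le> card cables" by (rule card_image_le[OF finite_cables])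
  finally have "card (\<Union>?seconds) \<le> card cables" .
  then show ?thesis unfolding critical_def
    using card_Un_le[of "\<Union>big" "\<Union>?seconds"] card_Union_big_le card_big_le card_cables_le
    by linarith
qed

lemma nbhd_cable_second: "P \<in> cables \<Longrightarrow> nbhd TE (P ! 1) = {P ! 0, P ! 2}"
  using cablesD(9)[of P 1] cablesD(4)[of P] by (simp add: numeral_2_eq_2)

lemma cable_second_not_big: "P \<in> cables \<Longrightarrow> P ! 1 \<notin> big"
  using cable_secondD(2) by (simp add: big_def)

lemma big_three_colouring:
  obtains col where "col ` big \<subseteq> {1, 2, 3 :: nat}" "\<And>A B. {A, B} \<in> big_edges \<Longrightarrow> col A \<noteq> col B"
proof -
  have "simple_graph big big_edges"
    by (rule simple_graph_subgraph[OF simple_T big_subset]) (auto simp: big_edges_def)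
  moreover have "pairwise disjnt {C. is_cycle big big_edges C}"
    using T_cycles_disjoint big_subset by (rule pairwise_disjnt_cycles_mono) (auto simp: big_edges_def)
  ultimately show ?thesis using three_colouring that by blast
qed

lemma cable_colouring_exists:
  obtains h :: "'v set \<Rightarrow> nat"
  where "h ` (big \<union> (\<lambda>P. P ! 1) ` cables) \<subseteq> {1, 2, 3}"
    "\<And>A B. {A, B} \<in> big_edges \<Longrightarrow> h A \<noteq> h B" "\<And>P. P \<in> cables \<Longrightarrow> h (P ! 0) \<noteq> h (P ! 1)"
proof -
  obtain col where col: "col ` big \<subseteq> {1, 2, 3 :: nat}" "\<And>A B. {A, B} \<in> big_edges \<Longrightarrow> col A \<noteq> col B"
    using big_three_colouring by blast
  have "\<forall>W\<in>(\<lambda>P. P ! 1) ` cables. \<exists>c. c \<in> {1, 2, 3 :: nat} \<and> c \<notin> col ` (nbhd TE W \<inter> big)"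
  proof
    fix W assume "W \<in> (\<lambda>P. P ! 1) ` cables"
    then obtain P where P: "P \<in> cables" "W = P ! 1" by blast
    then have nb: "nbhd TE W = {P ! 0, P ! 2}" using nbhd_cable_second by simp
    then have "card (nbhd TE W \<inter> big) \<le> card {P ! 0, P ! 2}" by (intro card_mono) auto
    also have "\<dots> \<le> 2" by (cases "P ! 0 = P ! 2") simp_all
    finally have "card (nbhd TE W \<inter> big) \<le> 2" .
    moreover have "finite (nbhd TE W \<inter> big)" using nb by simp
    ultimately obtain c where "c \<in> {1, 2, 3}" "c \<notin> col ` (nbhd TE W \<inter> big)"
      using colour_avoiding by metis
    then show "\<exists>c. c \<in> {1, 2, 3 :: nat} \<and> c \<notin> col ` (nbhd TE W \<inter> big)" by blast
  qed
  then obtain avoid where avoid: "\<And>W. W \<in> (\<lambda>P. P ! 1) ` cables \<Longrightarrow>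
      avoid W \<in> {1, 2, 3 :: nat} \<and> avoid W \<notin> col ` (nbhd TE W \<inter> big)"
    by metis
  define h where "h W = (if W \<in> big then col W else avoid W)" for W
  show ?thesis
  proof (rule that)
    show "h ` (big \<union> (\<lambda>P. P ! 1) ` cables) \<subseteq> {1, 2, 3}"
      using col(1) avoid cable_second_not_big by (auto simp: h_def)
    show "h A \<noteq> h B" if "{A, B} \<in> big_edges" for A B
      using col(2)[OF that] that by (simp add: h_def big_edges_def)
    show "h (P ! 0) \<noteq> h (P ! 1)" if P: "P \<in> cables" for P
    proof -
      have "col (P ! 0) \<in> col ` (nbhd TE (P ! 1) \<inter> big)"
        using nbhd_cable_second[OF P] cablesD(6)[OF P] by blast
      then show ?thesis
        using avoid[of "P ! 1"] P cablesD(6)[OF P] cable_second_not_big[OF P] by (auto simp: h_def)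
    qed
  qed
qed

lemma agrees_on_big:
  assumes "\<forall>v\<in>critical. f v = h (witness_of F v)" "W \<in> big" "a \<in> W"
  shows "f a = h W"
  using assms witness_set(3) big_subset by (auto simp: critical_def)

lemma agrees_on_cable_second:
  assumes "\<forall>v\<in>critical. f v = h (witness_of F v)" "P \<in> cables" "b \<in> P ! 1"
  shows "f b = h (P ! 1)"
proof -
  have "b \<in> critical" using assms(2,3) unfolding critical_def by blast
  then show ?thesis using assms witness_set(3)[OF cable_secondD(1)[OF assms(2)]] by simp
qed

lemma witness_sets_monochromatic:
  assumes "\<forall>v\<in>critical. f v = h (witness_of F v)" "W \<in> TV" "a \<in> W" "b \<in> W"
  shows "f a = f b"
proof (cases "card W \<ge> 2")
  case True
  then show ?thesis using assms agrees_on_big[OF assms(1)] by (simp add: big_def)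
next
  case False
  then have "card W \<le> 1" by simp
  then show ?thesis using assms(2-4) witness_set(2) card_le_Suc0_iff_eq by (metis One_nat_def)
qed

lemma compatible_if_agrees_on_critical:
  assumes proper: "\<And>A B. {A, B} \<in> big_edges \<Longrightarrow> h A \<noteq> h B"
    and cable_start: "\<And>P. P \<in> cables \<Longrightarrow> h (P ! 0) \<noteq> h (P ! 1)"
    and agree: "\<forall>v\<in>critical. f v = h (witness_of F v)"
  shows "compatible V E F f"
proof -
  note on_big = agrees_on_big[OF agree]
  have on_cable: "f a \<noteq> f b" if P: "P \<in> cables" and "a \<in> P ! 0" "b \<in> P ! 1" for P a b
    using on_big[OF cablesD(6)[OF P] that(2)] agrees_on_cable_second[OF agree P that(3)]
      cable_start[OF P] by simp
  have "\<forall>W\<in>TV. \<forall>a\<in>W. \<forall>b\<in>W. f a = f b" using witness_sets_monochromatic[OF agree] by blast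
  moreover have "\<forall>A B. {A, B} \<in> TE \<and> A \<noteq> B \<and> card A \<ge> 2 \<and> card B \<ge> 2 \<longrightarrow> (\<forall>a\<in>A. \<forall>b\<in>B. f a \<noteq> f b)"
  proof (intro allI impI ballI)
    fix A B a b assume AB: "{A, B} \<in> TE \<and> A \<noteq> B \<and> card A \<ge> 2 \<and> card B \<ge> 2" and "a \<in> A" "b \<in> B"
    then have "A \<in> big" "B \<in> big" using simple_graph_edgeD(2,3)[OF simple_T] by (auto simp: big_def)
    then show "f a \<noteq> f b" using AB \<open>a \<in> A\<close> \<open>b \<in> B\<close> on_big proper by (auto simp: big_edges_def)
  qed
  moreover have "\<forall>ps. cable_path TV TE ps \<and> length ps \<ge> 3 \<and> card (hd ps) \<ge> 2 \<and> card (last ps) \<ge> 2 \<and>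
      (\<forall>i. 0 < i \<and> i + 1 < length ps \<longrightarrow> card (ps ! i) = 1) \<longrightarrow>
      (\<forall>a\<in>hd ps. \<forall>b\<in>ps ! 1. f a \<noteq> f b) \<and>
      (\<forall>a\<in>last ps. \<forall>b\<in>ps ! (length ps - 2). f a \<noteq> f b)"
  proof (intro allI impI)
    fix ps assume "cable_path TV TE ps \<and> length ps \<ge> 3 \<and> card (hd ps) \<ge> 2 \<and> card (last ps) \<ge> 2 \<and>
      (\<forall>i. 0 < i \<and> i + 1 < length ps \<longrightarrow> card (ps ! i) = 1)"
    then have ps: "ps \<in> cables" by (simp add: cables_def)
    have "rev ps ! 0 = last ps" "rev ps ! 1 = ps ! (length ps - 2)"
      using cablesD(4,10)[OF ps] by (simp_all add: rev_nth last_conv_nth numeral_2_eq_2)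
    then show "(\<forall>a\<in>hd ps. \<forall>b\<in>ps ! 1. f a \<noteq> f b) \<and>
        (\<forall>a\<in>last ps. \<forall>b\<in>ps ! (length ps - 2). f a \<noteq> f b)"
      using on_cable[OF ps] on_cable[OF rev_in_cables[OF ps]] cablesD(10)[OF ps]
      by (simp add: hd_conv_nth)
  qed
  ultimately show ?thesis unfolding compatible_def Let_def by blast
qed

end

theorem lemma3p3:
  fixes V :: "'v set" and E F :: "'v set set" and k :: nat
  assumes "simple_graph V E"
    and "two_connected V E"
    and "F \<subseteq> E" and "card F \<le> k"
    and "cactus (witness_structure V F) (contract_edges V E F)"
  shows "measure_pmf.prob (pmf_of_set (PiE V (\<lambda>_. {1, 2, 3 :: nat})))
           {f. compatible V E F f} \<ge> 1 / 3 ^ (6 * k)"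
proof -
  interpret contraction V E F
    using assms(1,3) cactus_cycles_disjoint[OF assms(5)] by unfold_locales
  obtain h where h: "h ` (big \<union> (\<lambda>P. P ! 1) ` cables) \<subseteq> {1, 2, 3 :: nat}"
    "\<And>A B. {A, B} \<in> big_edges \<Longrightarrow> h A \<noteq> h B" "\<And>P. P \<in> cables \<Longrightarrow> h (P ! 0) \<noteq> h (P ! 1)"
    using cable_colouring_exists by blast
  have "\<forall>v\<in>critical. h (witness_of F v) \<in> {1, 2, 3}" using h(1) witness_of_critical unfolding image_subset_iff by blast
  moreover have "compatible V E F f" if "\<forall>v\<in>critical. f v = h (witness_of F v)" for f
    using h(2,3) that by (rule compatible_if_agrees_on_critical)
  ultimately have "1 / real (card {1, 2, 3 :: nat}) ^ card critical
      \<le> measure_pmf.prob (pmf_of_set (PiE V (\<lambda>_. {1, 2, 3 :: nat}))) {f. compatible V E F f}"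
    by (intro prob_PiE_agrees_on_ge[OF finite_V _ _ critical_subset]) auto
  moreover have "1 / 3 ^ (6 * k) \<le> 1 / (3 :: real) ^ card critical"
    using card_critical_le assms(4) by (intro divide_left_mono power_increasing) simp_all
  ultimately show ?thesis by simp
qed

end
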